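(* Suppose the shortest $s_0$-$s_1$ path $P_0$ in $G$ is unique. Then along every trajectory of the Physarum dynamics, for every vertex $v$ on $P_0$, $p_v(t)\to \operatorname{dist}(v,s_1)$ as $t\to\infty$, where $\operatorname{dist}(v,s_1)$ is the shortest-path distance (w.r.t. the lengths $L$) from $v$ to $s_1$ in $G$.
   Context: Let $G=(N,E)$ be a finite connected undirected graph with two distinct vertices $s_0$ (source) and $s_1$ (sink). Each edge $e$ has a fixed length $L_e>0$. Each edge has a time-dependent diameter $D_e(t)$ with $D_e(0)>0$, and resistance $R_e=L_e/D_e$. At each time $t$, the vertex potentials $p_v$ (normalized by $p_{s_1}=0$) are the solution of $\sum_{u\in\delta(v)}(p_v-p_u)/R_{uv}=b_v$ for all $v$, where $\delta(v)$ is the set of neighbours of $v$, $b_{s_0}=1$, $b_{s_1}=-1$, $b_v=0$ otherwise; for an edge $e=\{u,v\}$ with an arbitrarily fixed orientation $(u,v)$ the current is $Q_e=(p_u-p_v)/R_e=D_e(p_u-p_v)/L_e$. The diameters evolve by $\dot D_e(t)=|Q_e(t)|-D_e(t)$ for all $e\in E$ (the "Physarum dynamics"). *)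

theory Defs
  imports "HOL-Analysis.Analysis"
begin

definition simple_graph :: "'a set \<Rightarrow> 'a set set \<Rightarrow> bool" where
  "simple_graph N E \<longleftrightarrow> finite N \<and> E \<subseteq> {{u, v} | u v. u \<in> N \<and> v \<in> N \<and> u \<noteq> v}"

definition walk :: "'a set set \<Rightarrow> 'a list \<Rightarrow> bool" where
  "walk E xs \<longleftrightarrow> xs \<noteq> [] \<and> (\<forall>i. Suc i < length xs \<longrightarrow> {xs ! i, xs ! Suc i} \<in> E)"

definition connected_graph :: "'a set \<Rightarrow> 'a set set \<Rightarrow> bool" where
  "connected_graph N E \<longleftrightarrow>
     (\<forall>u\<in>N. \<forall>v\<in>N. \<exists>xs. walk E xs \<and> hd xs = u \<and> last xs = v)"

definition is_path :: "'a set set \<Rightarrow> 'a \<Rightarrow> 'a \<Rightarrow> 'a list \<Rightarrow> bool" where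
  "is_path E u v xs \<longleftrightarrow> walk E xs \<and> distinct xs \<and> hd xs = u \<and> last xs = v"

definition path_len :: "('a set \<Rightarrow> real) \<Rightarrow> 'a list \<Rightarrow> real" where
  "path_len L xs = (\<Sum>i<length xs - 1. L {xs ! i, xs ! Suc i})"

definition shortest_path :: "'a set set \<Rightarrow> ('a set \<Rightarrow> real) \<Rightarrow> 'a \<Rightarrow> 'a \<Rightarrow> 'a list \<Rightarrow> bool" where
  "shortest_path E L u v P \<longleftrightarrow> is_path E u v P \<and>
     (\<forall>Q. is_path E u v Q \<longrightarrow> path_len L P \<le> path_len L Q)"

definition dist_L :: "'a set set \<Rightarrow> ('a set \<Rightarrow> real) \<Rightarrow> 'a \<Rightarrow> 'a \<Rightarrow> real" where
  "dist_L E L u v = Min (path_len L ` {xs. is_path E u v xs})"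

definition nbrs :: "'a set set \<Rightarrow> 'a \<Rightarrow> 'a set" where
  "nbrs E v = {u. {u, v} \<in> E}"

definition supply_b :: "'a \<Rightarrow> 'a \<Rightarrow> 'a \<Rightarrow> real" where
  "supply_b s0 s1 v = (if v = s0 then 1 else if v = s1 then -1 else 0)"

text \<open>Physarum trajectory for t >= 0: D t e are the diameters, p t v the potentials
  (normalised p s1 = 0, solving the Kirchhoff system with R_e = L_e / D_e),
  and D evolves by D' = |Q| - D with |Q_e| = D_e |p_u - p_v| / L_e.\<close>
definition physarum_traj ::
  "'a set \<Rightarrow> 'a set set \<Rightarrow> ('a set \<Rightarrow> real) \<Rightarrow> 'a \<Rightarrow> 'a \<Rightarrow>
   (real \<Rightarrow> 'a set \<Rightarrow> real) \<Rightarrow> (real \<Rightarrow> 'a \<Rightarrow> real) \<Rightarrow> bool" where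
  "physarum_traj N E L s0 s1 D p \<longleftrightarrow>
     (\<forall>e\<in>E. D 0 e > 0) \<and>
     (\<forall>t\<ge>0. p t s1 = 0 \<and>
        (\<forall>v\<in>N. (\<Sum>u\<in>nbrs E v. (p t v - p t u) / (L {u, v} / D t {u, v})) = supply_b s0 s1 v) \<and>
        (\<forall>u v. {u, v} \<in> E \<longrightarrow>
           ((\<lambda>\<tau>. D \<tau> {u, v}) has_real_derivative
              (\<bar>D t {u, v} * (p t u - p t v) / L {u, v}\<bar> - D t {u, v})) (at t within {0..})))"

end

theory Submission
  imports Defs
begin

(* Write x_i = D(e_i) and L_i for the diameters and lengths of the edges e_0, ..., e_{k-1}
   of the shortest path P0, L* = sum L_i for its length, V = sum L_e D_e for the total
   volume and V_O for the volume of the edges off P0.  The argument has five steps: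
   (1) Kirchhoff's law gives, for every vertex function phi, the identity
       sum over arcs (phi v - phi u) Q_vu = 2 (phi s0 - phi s1); applied to p it is the
       energy identity, applied to a shortest-path distance it gives flow/length bounds.
   (2) With lengths in which the edges off P0 are shrunk by a factor 1 - eps (eps is
       chosen from the gap between P0 and the other paths) this yields
       sum_e D_e |dp_e| >= 2 L* + eps * (same sum over the edges off P0).
   (3) Hence F = sum L_i ln x_i - L* ln V is nondecreasing; it is bounded above, so
       all x_i stay comparable to V, and V and the potential drop p(s0) stay bounded.
   (4) G = V_O - K F is nonincreasing and bounded below, and its decrease over unit time
       intervals dominates V_O, so V_O -> 0 and the currents off P0 vanish.
   (5) A cut argument then shows that the current on each path edge tends to 1, so by
       the relaxation ODE x_i -> 1 and the potential differences tend to L_i; telescoping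
       along P0 gives p v -> dist(v, s1).  *)


section \<open>Scalar differential inequalities\<close>

lemma nondecreasing_from_deriv:
  fixes h h' :: "real \<Rightarrow> real"
  assumes "0 \<le> T" "T \<le> t"
    and d: "\<And>s. s \<ge> T \<Longrightarrow> (h has_real_derivative h' s) (at s within {0..})"
    and nn: "\<And>s. s \<ge> T \<Longrightarrow> s \<le> t \<Longrightarrow> h' s \<ge> 0"
  shows "h T \<le> h t"
proof (rule DERIV_nonneg_imp_increasing_open[OF assms(2)])
  fix x assume x: "T < x" "x < t"
  have "{0<..} \<subseteq> {0::real..}" by auto
  then have "(h has_real_derivative h' x) (at x within {0<..})"
    using has_field_derivative_subset[OF d[of x]] x by simp
  then have "(h has_real_derivative h' x) (at x)"
    using x assms(1) at_within_open[of x "{0<..}"] by simp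
  then show "\<exists>y. (h has_real_derivative y) (at x) \<and> 0 \<le> y" using nn[of x] x by auto
next
  show "continuous_on {T..t} h"
    unfolding continuous_on_eq_continuous_within
  proof
    fix x :: real assume x: "x \<in> {T..t}"
    have "continuous (at x within {0..}) h"
      using DERIV_continuous[OF d[of x]] x by simp
    then show "continuous (at x within {T..t}) h"
      by (rule continuous_within_subset) (use assms(1) in auto)
  qed
qed

lemma relaxation_lower_bound:
  fixes f f' :: "real \<Rightarrow> real"
  assumes T: "0 \<le> T" and t: "T \<le> t"
    and d: "\<And>s. s \<ge> T \<Longrightarrow> (f has_real_derivative f' s) (at s within {0..})"
    and ge: "\<And>s. s \<ge> T \<Longrightarrow> f' s \<ge> a - f s"
  shows "f t \<ge> a + (f T - a) * exp (-(t - T))"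
proof -
  let ?h = "\<lambda>s. (f s - a) * exp s"
  have "?h T \<le> ?h t"
  proof (rule nondecreasing_from_deriv[OF T t])
    fix s assume s: "s \<ge> T"
    show "(?h has_real_derivative (f' s * exp s + (f s - a) * exp s)) (at s within {0..})"
      by (rule derivative_eq_intros d[OF s] refl | simp)+
    have "(f' s + (f s - a)) * exp s \<ge> 0" using ge[OF s] by simp
    then show "f' s * exp s + (f s - a) * exp s \<ge> 0" by (simp add: algebra_simps)
  qed
  then have "(f T - a) * exp T * exp (-t) \<le> (f t - a) * exp t * exp (-t)"
    by (simp add: mult_right_mono)
  then have "(f T - a) * exp (-(t - T)) \<le> f t - a"
    by (simp add: mult.assoc exp_add[symmetric] exp_diff)
  then show ?thesis by simp
qed

lemma relaxation_upper_bound: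
  fixes f f' :: "real \<Rightarrow> real"
  assumes T: "0 \<le> T" and t: "T \<le> t"
    and d: "\<And>s. s \<ge> T \<Longrightarrow> (f has_real_derivative f' s) (at s within {0..})"
    and le: "\<And>s. s \<ge> T \<Longrightarrow> f' s \<le> a - f s"
  shows "f t \<le> a + (f T - a) * exp (-(t - T))"
proof -
  have "- f t \<ge> (-a) + (- f T - (-a)) * exp (-(t - T))"
  proof (rule relaxation_lower_bound[OF T t, where f' = "\<lambda>s. - f' s"])
    fix s assume s: "s \<ge> T"
    show "((\<lambda>s. - f s) has_real_derivative - f' s) (at s within {0..})"
      using d[OF s] by (rule DERIV_minus)
    show "- f' s \<ge> - a - - f s" using le[OF s] by simp
  qed
  then show ?thesis by (simp add: algebra_simps)
qed

lemma relaxation_global_lower: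
  fixes f f' :: "real \<Rightarrow> real"
  assumes d: "\<And>s. s \<ge> 0 \<Longrightarrow> (f has_real_derivative f' s) (at s within {0..})"
    and ge: "\<And>s. s \<ge> 0 \<Longrightarrow> f' s \<ge> a - f s" and t: "t \<ge> 0"
  shows "f t \<ge> min (f 0) a"
proof -
  have f: "f t \<ge> a + (f 0 - a) * exp (-t)"
    using relaxation_lower_bound[of 0 t f f' a] d ge t by simp
  have "(f 0 - a) * exp (-t) \<ge> min 0 (f 0 - a)"
  proof (cases "f 0 - a \<ge> 0")
    case False
    then have "(f 0 - a) * exp (-t) \<ge> (f 0 - a) * 1" using t by (intro mult_left_mono_neg) auto
    then show ?thesis by simp
  qed simp
  then show ?thesis using f by linarith
qed

lemma relaxation_global_upper:
  fixes f f' :: "real \<Rightarrow> real"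
  assumes d: "\<And>s. s \<ge> 0 \<Longrightarrow> (f has_real_derivative f' s) (at s within {0..})"
    and le: "\<And>s. s \<ge> 0 \<Longrightarrow> f' s \<le> a - f s" and t: "t \<ge> 0"
  shows "f t \<le> max (f 0) a"
proof -
  have "- f t \<ge> min (- f 0) (- a)"
  proof (rule relaxation_global_lower[OF _ _ t])
    fix s :: real assume s: "s \<ge> 0"
    show "((\<lambda>s. - f s) has_real_derivative - f' s) (at s within {0..})"
      using d[OF s] by (rule DERIV_minus)
    show "- f' s \<ge> - a - - f s" using le[OF s] by simp
  qed
  then show ?thesis by linarith
qed

lemma relaxation_band:
  fixes f g :: "real \<Rightarrow> real"
  assumes T: "0 \<le> T" and t: "T \<le> t"
    and d: "\<And>s. s \<ge> T \<Longrightarrow> (f has_real_derivative (g s - f s)) (at s within {0..})"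
    and close: "\<And>s. s \<ge> T \<Longrightarrow> \<bar>g s - l\<bar> \<le> \<delta>"
  shows "\<bar>f t - l\<bar> \<le> \<delta> + (\<bar>f T - l\<bar> + \<delta>) * exp (-(t - T))"
proof -
  have lo: "f t \<ge> (l - \<delta>) + (f T - (l - \<delta>)) * exp (-(t - T))"
  proof (rule relaxation_lower_bound[OF T t d])
    show "g s - f s \<ge> (l - \<delta>) - f s" if "s \<ge> T" for s using close[OF that] by linarith
  qed
  have up: "f t \<le> (l + \<delta>) + (f T - (l + \<delta>)) * exp (-(t - T))"
  proof (rule relaxation_upper_bound[OF T t d])
    show "g s - f s \<le> (l + \<delta>) - f s" if "s \<ge> T" for s using close[OF that] by linarith
  qed
  have "\<delta> \<ge> 0" using close[of T] by simp
  then have "\<bar>f T - (l - \<delta>)\<bar> \<le> \<bar>f T - l\<bar> + \<delta>" "\<bar>f T - (l + \<delta>)\<bar> \<le> \<bar>f T - l\<bar> + \<delta>" by auto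
  then have "\<bar>(f T - (l - \<delta>)) * exp (-(t - T))\<bar> \<le> (\<bar>f T - l\<bar> + \<delta>) * exp (-(t - T))"
    "\<bar>(f T - (l + \<delta>)) * exp (-(t - T))\<bar> \<le> (\<bar>f T - l\<bar> + \<delta>) * exp (-(t - T))"
    by (auto simp: abs_mult intro: mult_right_mono)
  then show ?thesis using lo up unfolding abs_le_iff by linarith
qed

lemma relaxation_limit:
  fixes f g :: "real \<Rightarrow> real"
  assumes d: "\<And>s. s \<ge> 0 \<Longrightarrow> (f has_real_derivative (g s - f s)) (at s within {0..})"
    and g: "(g \<longlongrightarrow> l) at_top"
  shows "(f \<longlongrightarrow> l) at_top"
proof (rule tendstoI)
  fix e :: real assume e: "e > 0"
  have "\<forall>\<^sub>F s in at_top. dist (g s) l < e / 2" using tendstoD[OF g, of "e/2"] e by simp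
  then obtain T where T: "T \<ge> 0" "\<And>s. s \<ge> T \<Longrightarrow> \<bar>g s - l\<bar> \<le> e / 2"
    unfolding eventually_at_top_linorder dist_real_def
    by (metis less_eq_real_def max.cobounded1 max.cobounded2 order_trans)
  define M where "M = \<bar>f T - l\<bar> + e / 2"
  have "((\<lambda>t. M * exp T * exp (- t)) \<longlongrightarrow> M * exp T * 0) at_top"
    by (intro tendsto_intros filterlim_compose[OF exp_at_bot filterlim_uminus_at_bot_at_top])
  moreover have "(\<lambda>t. M * exp T * exp (- t)) = (\<lambda>t. M * exp (-(t - T)))"
    by (rule ext) (simp add: exp_diff exp_minus field_simps)
  ultimately have "((\<lambda>t. M * exp (-(t - T))) \<longlongrightarrow> 0) at_top" by simp
  then have small: "\<forall>\<^sub>F t in at_top. M * exp (-(t - T)) < e / 2"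
    using order_tendstoD(2) e by (metis half_gt_zero)
  show "\<forall>\<^sub>F t in at_top. dist (f t) l < e"
    using eventually_ge_at_top[of T] small
  proof eventually_elim
    case (elim t)
    then show ?case
      using relaxation_band[OF T(1) elim(1) d T(2)] T(1) unfolding M_def dist_real_def by force
  qed
qed

lemma antitone_bounded_small_steps:
  fixes G :: "real \<Rightarrow> real"
  assumes mono: "\<And>s t. 0 \<le> s \<Longrightarrow> s \<le> t \<Longrightarrow> G t \<le> G s"
    and bdd: "\<And>t. t \<ge> 0 \<Longrightarrow> G t \<ge> B"
    and e: "e > 0"
  shows "\<exists>T\<ge>0. \<forall>t\<ge>T. G t - G (t + 1) < e"
proof -
  define g where "g = Inf (G ` {0..})"
  have bd: "bdd_below (G ` {0..})" using bdd by (auto intro!: bdd_belowI)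
  have "g < g + e" using e by simp
  then obtain T where T: "T \<ge> 0" "G T < g + e"
    using cInf_lessD[of "G ` {0..}" "g + e"] unfolding g_def by auto
  show ?thesis
  proof (intro exI[of _ T] conjI allI impI)
    fix t assume t: "t \<ge> T"
    have "G (t+1) \<ge> g" unfolding g_def by (rule cInf_lower[OF _ bd]) (use T t in auto)
    moreover have "G t \<le> G T" using mono T t by auto
    ultimately show "G t - G (t + 1) < e" using T by linarith
  qed (use T in auto)
qed

section \<open>Paths and shortest-path distances\<close>

lemma path_len_Cons:
  assumes "Q \<noteq> []"
  shows "path_len w (u # Q) = w {u, hd Q} + path_len w Q"
proof -
  obtain n where n: "length Q = Suc n" using assms by (cases Q) auto
  have "path_len w (u # Q) = (\<Sum>i<Suc n. w {(u#Q) ! i, (u#Q) ! Suc i})"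
    unfolding path_len_def using n by simp
  also have "\<dots> = w {u, Q ! 0} + (\<Sum>i<n. w {Q ! i, Q ! Suc i})"
    by (subst sum.lessThan_Suc_shift) simp
  also have "\<dots> = w {u, hd Q} + path_len w Q"
    unfolding path_len_def using n assms by (simp add: hd_conv_nth)
  finally show ?thesis .
qed

lemma path_len_drop:
  assumes nn: "\<And>i. Suc i < length Q \<Longrightarrow> w {Q ! i, Q ! Suc i} \<ge> 0"
  shows "path_len w (drop m Q) \<le> path_len w Q"
proof -
  have "path_len w (drop m Q) = (\<Sum>i<length Q - m - 1. w {Q ! (m + i), Q ! Suc (m + i)})"
    unfolding path_len_def by (intro sum.cong) auto
  also have "\<dots> = (\<Sum>j\<in>(\<lambda>i. m + i) ` {..<length Q - m - 1}. w {Q ! j, Q ! Suc j})"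
    by (subst sum.reindex) (auto simp: inj_on_def)
  also have "\<dots> \<le> (\<Sum>j<length Q - 1. w {Q ! j, Q ! Suc j})"
    by (rule sum_mono2) (auto intro!: nn)
  finally show ?thesis unfolding path_len_def .
qed

lemma path_drop:
  assumes "is_path E x y Q" "m < length Q"
  shows "is_path E (Q ! m) y (drop m Q)"
  using assms unfolding is_path_def walk_def
  by (auto simp: hd_drop_conv_nth last_drop)

lemma path_cons:
  assumes "is_path E v y Q" "{u, v} \<in> E" "u \<notin> set Q"
  shows "is_path E u y (u # Q)"
proof -
  have Q: "Q \<noteq> []" "hd Q = v" "walk E Q" "distinct Q" "last Q = y"
    using assms unfolding is_path_def walk_def by auto
  have "walk E (u # Q)"
    unfolding walk_def
  proof (intro conjI allI impI)
    fix i assume i: "Suc i < length (u # Q)"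
    show "{(u # Q) ! i, (u # Q) ! Suc i} \<in> E"
    proof (cases i)
      case 0 then show ?thesis using Q assms(2) by (simp add: hd_conv_nth[symmetric])
    next
      case (Suc j) then show ?thesis using Q i by (auto simp: walk_def)
    qed
  qed simp
  then show ?thesis using Q assms(3) unfolding is_path_def by auto
qed

lemma path_transfer:
  assumes "{u, v} \<in> E" "is_path E v z Q"
  shows "\<exists>R. is_path E u z R"
proof (cases "u \<in> set Q")
  case True
  then obtain m where m: "m < length Q" "Q ! m = u" by (auto simp: in_set_conv_nth)
  show ?thesis using path_drop[OF assms(2) m(1)] m by auto
next
  case False
  show ?thesis using path_cons[OF assms(2) assms(1) False] by auto
qed

locale finite_simple_graph =
  fixes N :: "'a set" and E :: "'a set set"
  assumes simple: "simple_graph N E"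
begin

lemma finite_N: "finite N" using simple by (simp add: simple_graph_def)

lemma edgeD: assumes "{u, v} \<in> E" shows "u \<in> N" "v \<in> N" "u \<noteq> v"
proof -
  from assms simple obtain a b where "{u,v} = {a,b}" "a \<in> N" "b \<in> N" "a \<noteq> b"
    unfolding simple_graph_def by blast
  then show "u \<in> N" "v \<in> N" "u \<noteq> v" by (auto simp: doubleton_eq_iff)
qed

lemma edge_obtain: assumes "e \<in> E" obtains u v where "e = {u, v}"
  using assms simple unfolding simple_graph_def by blast

lemma finite_nbrs: "finite (nbrs E v)"
  by (rule finite_subset[OF _ finite_N]) (auto simp: nbrs_def dest: edgeD)

lemma walk_in_N:
  assumes "walk E Q" "last Q \<in> N" shows "set Q \<subseteq> N"
proof
  fix x assume "x \<in> set Q"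
  then obtain i where i: "i < length Q" "Q ! i = x" by (auto simp: in_set_conv_nth)
  show "x \<in> N"
  proof (cases "Suc i < length Q")
    case True
    then have "{Q ! i, Q ! Suc i} \<in> E" using assms by (auto simp: walk_def)
    then show ?thesis using edgeD i by auto
  next
    case False
    then have "i = length Q - 1" using i by auto
    then show ?thesis using assms i by (auto simp: walk_def last_conv_nth)
  qed
qed

lemma finite_paths: assumes "z \<in> N" shows "finite {Q. is_path E v z Q}"
proof (rule finite_subset[OF _ finite_subset_distinct[OF finite_N]])
  show "{Q. is_path E v z Q} \<subseteq> {xs. set xs \<subseteq> N \<and> distinct xs}"
    using walk_in_N assms by (auto simp: is_path_def)
qed

lemma dist_le_path_len:
  assumes "z \<in> N" "is_path E x z Q"
  shows "dist_L E w x z \<le> path_len w Q"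
  unfolding dist_L_def using assms finite_paths by (intro Min_le) auto

lemma dist_attained:
  assumes "z \<in> N" "is_path E x z Q0"
  obtains Q where "is_path E x z Q" "path_len w Q = dist_L E w x z"
proof -
  have "dist_L E w x z \<in> path_len w ` {Q. is_path E x z Q}"
    unfolding dist_L_def using assms finite_paths by (intro Min_in) auto
  then show ?thesis using that by auto
qed

lemma dist_edge_Lipschitz:
  assumes z: "z \<in> N" and wnn: "\<forall>e\<in>E. w e \<ge> 0" and e: "{u, v} \<in> E"
  shows "dist_L E w u z \<le> w {u, v} + dist_L E w v z"
proof (cases "\<exists>Q0. is_path E v z Q0")
  case False
  have "{Q. is_path E u z Q} = {}"
    using path_transfer[of v u E z] e False by (auto simp: insert_commute)
  then have "dist_L E w u z = dist_L E w v z" using False by (simp add: dist_L_def)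
  then show ?thesis using wnn e by auto
next
  case True
  then obtain Q where Q: "is_path E v z Q" "path_len w Q = dist_L E w v z"
    using dist_attained[OF z] by blast
  have nnQ: "\<And>i. Suc i < length Q \<Longrightarrow> w {Q ! i, Q ! Suc i} \<ge> 0"
    using Q(1) wnn by (auto simp: is_path_def walk_def)
  show ?thesis
  proof (cases "u \<in> set Q")
    case True
    then obtain m where m: "m < length Q" "Q ! m = u" by (auto simp: in_set_conv_nth)
    have "dist_L E w u z \<le> path_len w (drop m Q)"
      using dist_le_path_len[OF z] path_drop[OF Q(1) m(1)] m by auto
    also have "\<dots> \<le> path_len w Q" using nnQ by (rule path_len_drop)
    finally show ?thesis using Q wnn e by auto
  next
    case False
    have "dist_L E w u z \<le> path_len w (u # Q)"
      using dist_le_path_len[OF z] path_cons[OF Q(1) e False] by auto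
    also have "\<dots> = w {u, hd Q} + path_len w Q"
      by (rule path_len_Cons) (use Q in \<open>auto simp: is_path_def walk_def\<close>)
    finally show ?thesis using Q by (auto simp: is_path_def)
  qed
qed

end

section \<open>Electrical flows along a Physarum trajectory\<close>

locale physarum = finite_simple_graph N E
  for N :: "'a set" and E :: "'a set set" +
  fixes L :: "'a set \<Rightarrow> real" and s0 s1 :: 'a
    and D :: "real \<Rightarrow> 'a set \<Rightarrow> real" and p :: "real \<Rightarrow> 'a \<Rightarrow> real"
  assumes s0_N: "s0 \<in> N" and s1_N: "s1 \<in> N" and s0_ne_s1: "s0 \<noteq> s1"
    and L_pos': "\<forall>e\<in>E. L e > 0"
    and traj: "physarum_traj N E L s0 s1 D p"
begin

lemma L_pos: "e \<in> E \<Longrightarrow> L e > 0" using L_pos' by auto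

text \<open>The arcs: both orientations \<open>(v, u)\<close> of every edge \<open>{u, v}\<close>.  Sums over arcs
  count each edge twice, which makes Kirchhoff's law easy to sum.\<close>
definition arcs :: "('a \<times> 'a) set" where "arcs = (SIGMA v:N. nbrs E v)"

lemma arcs_iff: "(v, u) \<in> arcs \<longleftrightarrow> {u, v} \<in> E"
  by (auto simp: arcs_def nbrs_def dest: edgeD)

lemma finite_arcs: "finite arcs" unfolding arcs_def using finite_N finite_nbrs by auto

lemma sum_arcs_swap: "(\<Sum>(v, u)\<in>arcs. f v u) = (\<Sum>(v, u)\<in>arcs. f u v)"
  by (rule sum.reindex_bij_witness[of _ prod.swap prod.swap])
     (auto simp: arcs_iff insert_commute)

text \<open>Conductance \<open>D_e / L_e\<close> of an edge, so that the current from \<open>v\<close> to \<open>u\<close> is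
  \<open>cond t v u * (p t v - p t u)\<close>.\<close>
definition cond :: "real \<Rightarrow> 'a \<Rightarrow> 'a \<Rightarrow> real" where "cond t v u = D t {u, v} / L {u, v}"

lemma cond_sym: "cond t u v = cond t v u" by (simp add: cond_def insert_commute)

lemma kirchhoff: assumes "t \<ge> 0" "v \<in> N"
  shows "(\<Sum>u\<in>nbrs E v. cond t v u * (p t v - p t u)) = supply_b s0 s1 v"
proof -
  have "(\<Sum>u\<in>nbrs E v. (p t v - p t u) / (L {u, v} / D t {u, v})) = supply_b s0 s1 v"
    using traj assms unfolding physarum_traj_def by blast
  then show ?thesis by (simp add: cond_def algebra_simps)
qed

lemma p_s1: "t \<ge> 0 \<Longrightarrow> p t s1 = 0"
  using traj unfolding physarum_traj_def by blast

lemma D_deriv: assumes "{u, v} \<in> E" "t \<ge> 0"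
  shows "((\<lambda>\<tau>. D \<tau> {u, v}) has_real_derivative
           (\<bar>D t {u, v} * (p t u - p t v) / L {u, v}\<bar> - D t {u, v})) (at t within {0..})"
  using traj assms unfolding physarum_traj_def by blast

text \<open>Diameters stay positive: \<open>D' \<ge> -D\<close> gives \<open>D t \<ge> D 0 * exp (-t)\<close>.\<close>
lemma D_pos: assumes e: "e \<in> E" and t: "t \<ge> 0" shows "D t e > 0"
proof -
  obtain u v where uv: "e = {u, v}" using edge_obtain[OF e] .
  have "D t {u, v} \<ge> 0 + (D 0 {u, v} - 0) * exp (- (t - 0))"
    by (rule relaxation_lower_bound[where f = "\<lambda>\<tau>. D \<tau> {u, v}", OF _ t D_deriv])
       (use e uv in auto)
  moreover have "D 0 {u, v} > 0" using traj e uv unfolding physarum_traj_def by blast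
  ultimately show ?thesis using uv by (smt (verit) exp_gt_zero mult_pos_pos)
qed

lemma cond_pos: "(v, u) \<in> arcs \<Longrightarrow> t \<ge> 0 \<Longrightarrow> cond t v u > 0"
  using D_pos L_pos by (auto simp: cond_def arcs_iff)

lemma kirchhoff_weighted: assumes "t \<ge> 0"
  shows "(\<Sum>(v, u)\<in>arcs. \<phi> v * (cond t v u * (p t v - p t u))) = \<phi> s0 - \<phi> s1"
proof -
  have "(\<Sum>(v, u)\<in>arcs. \<phi> v * (cond t v u * (p t v - p t u)))
      = (\<Sum>v\<in>N. \<Sum>u\<in>nbrs E v. \<phi> v * (cond t v u * (p t v - p t u)))"
    unfolding arcs_def by (rule sum.Sigma[symmetric]) (use finite_N finite_nbrs in auto)
  also have "\<dots> = (\<Sum>v\<in>N. \<phi> v * supply_b s0 s1 v)"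
    by (intro sum.cong refl) (simp add: sum_distrib_left[symmetric] kirchhoff[OF assms])
  also have "\<dots> = (\<Sum>v\<in>N. (if v = s0 then \<phi> s0 else 0) + (if v = s1 then - \<phi> s1 else 0))"
    by (intro sum.cong refl) (use s0_ne_s1 in \<open>auto simp: supply_b_def\<close>)
  also have "\<dots> = \<phi> s0 - \<phi> s1"
    by (simp add: sum.distrib s0_N s1_N finite_N sum.delta)
  finally show ?thesis .
qed

lemma kirchhoff_potential_identity: assumes "t \<ge> 0"
  shows "(\<Sum>(v, u)\<in>arcs. (\<phi> v - \<phi> u) * cond t v u * (p t v - p t u)) = 2 * (\<phi> s0 - \<phi> s1)"
proof -
  have "(\<Sum>(v, u)\<in>arcs. \<phi> u * (cond t v u * (p t v - p t u)))
      = (\<Sum>(v, u)\<in>arcs. \<phi> v * (cond t u v * (p t u - p t v)))"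
    by (rule sum_arcs_swap)
  also have "\<dots> = - (\<Sum>(v, u)\<in>arcs. \<phi> v * (cond t v u * (p t v - p t u)))"
    by (simp add: sum_negf[symmetric] cond_sym algebra_simps case_prod_unfold)
  finally have swapped: "(\<Sum>(v, u)\<in>arcs. \<phi> u * (cond t v u * (p t v - p t u))) = - (\<phi> s0 - \<phi> s1)"
    using kirchhoff_weighted[OF assms] by simp
  have "(\<Sum>(v, u)\<in>arcs. (\<phi> v - \<phi> u) * cond t v u * (p t v - p t u))
      = (\<Sum>(v, u)\<in>arcs. \<phi> v * (cond t v u * (p t v - p t u)))
        - (\<Sum>(v, u)\<in>arcs. \<phi> u * (cond t v u * (p t v - p t u)))"
    by (simp add: sum_subtractf[symmetric] algebra_simps case_prod_unfold)
  then show ?thesis using swapped kirchhoff_weighted[OF assms] by simp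
qed

lemma energy_identity: assumes "t \<ge> 0"
  shows "(\<Sum>(v, u)\<in>arcs. cond t v u * (p t v - p t u)\<^sup>2) = 2 * p t s0"
  using kirchhoff_potential_identity[OF assms, of "p t"] p_s1[OF assms]
  by (simp add: power2_eq_square algebra_simps case_prod_unfold)

lemma source_potential_nonneg: assumes "t \<ge> 0" shows "p t s0 \<ge> 0"
proof -
  have "(\<Sum>(v, u)\<in>arcs. cond t v u * (p t v - p t u)\<^sup>2) \<ge> 0"
    using cond_pos[OF _ assms] by (intro sum_nonneg) (auto simp: less_imp_le)
  then show ?thesis using energy_identity[OF assms] by simp
qed

text \<open>Volume \<open>\<Sum> L_e D_e\<close> and flux \<open>\<Sum> |Q_e| L_e = \<Sum> D_e |\<Delta>p_e|\<close> of a set of arcs; along the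
  dynamics the volume relaxes towards the flux.\<close>
definition vol :: "('a \<times> 'a) set \<Rightarrow> real \<Rightarrow> real" where
  "vol B t = (\<Sum>(v, u)\<in>B. L {u, v} * D t {u, v})"
definition flux :: "('a \<times> 'a) set \<Rightarrow> real \<Rightarrow> real" where
  "flux B t = (\<Sum>(v, u)\<in>B. D t {u, v} * \<bar>p t v - p t u\<bar>)"

lemma vol_nonneg: "B \<subseteq> arcs \<Longrightarrow> t \<ge> 0 \<Longrightarrow> vol B t \<ge> 0"
  and flux_nonneg: "B \<subseteq> arcs \<Longrightarrow> t \<ge> 0 \<Longrightarrow> flux B t \<ge> 0"
  unfolding vol_def flux_def
  using D_pos L_pos by (auto intro!: sum_nonneg simp: arcs_iff less_imp_le subset_iff)

lemma arc_volume_le: assumes "(v, u) \<in> B" "B \<subseteq> arcs" "t \<ge> 0"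
  shows "L {u, v} * D t {u, v} \<le> vol B t"
proof -
  have "finite B" using assms(2) finite_arcs by (rule finite_subset)
  moreover have "0 \<le> (case x of (v, u) \<Rightarrow> L {u, v} * D t {u, v})" if "x \<in> B - {(v, u)}" for x
    using that assms(2,3) L_pos D_pos by (cases x) (auto simp: arcs_iff subset_iff less_imp_le)
  ultimately show ?thesis
    unfolding vol_def using member_le_sum[OF assms(1), of "\<lambda>(v, u). L {u, v} * D t {u, v}"] by auto
qed

lemma vol_deriv: assumes B: "B \<subseteq> arcs" and t: "t \<ge> 0"
  shows "(vol B has_real_derivative (flux B t - vol B t)) (at t within {0..})"
proof -
  have "((\<lambda>\<tau>. \<Sum>x\<in>B. (case x of (v, u) \<Rightarrow> L {u, v} * D \<tau> {u, v})) has_real_derivative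
      (\<Sum>x\<in>B. (case x of (v, u) \<Rightarrow> D t {u, v} * \<bar>p t v - p t u\<bar> - L {u, v} * D t {u, v})))
      (at t within {0..})"
  proof (rule DERIV_sum)
    fix x assume x: "x \<in> B"
    obtain v u where vu: "x = (v, u)" by (cases x)
    have e: "{u, v} \<in> E" using x vu B by (auto simp: arcs_iff)
    have "((\<lambda>\<tau>. L {u, v} * D \<tau> {u, v}) has_real_derivative
        L {u, v} * (\<bar>D t {u, v} * (p t u - p t v) / L {u, v}\<bar> - D t {u, v})) (at t within {0..})"
      by (rule DERIV_cmult[OF D_deriv[OF e t]])
    moreover have "\<bar>D t {u, v} * (p t u - p t v) / L {u, v}\<bar> = D t {u, v} * \<bar>p t v - p t u\<bar> / L {u, v}"
      using D_pos[OF e t] L_pos[OF e] by (simp add: abs_mult abs_minus_commute)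
    moreover have "L {u, v} * (D t {u, v} * \<bar>p t v - p t u\<bar> / L {u, v} - D t {u, v})
       = D t {u, v} * \<bar>p t v - p t u\<bar> - L {u, v} * D t {u, v}"
      using L_pos[OF e] by (simp add: field_simps)
    ultimately show "((\<lambda>\<tau>. case x of (v, u) \<Rightarrow> L {u, v} * D \<tau> {u, v}) has_real_derivative
      (case x of (v, u) \<Rightarrow> D t {u, v} * \<bar>p t v - p t u\<bar> - L {u, v} * D t {u, v})) (at t within {0..})"
      unfolding vu by simp
  qed
  moreover have "(\<Sum>x\<in>B. (case x of (v, u) \<Rightarrow> D t {u, v} * \<bar>p t v - p t u\<bar> - L {u, v} * D t {u, v}))
      = flux B t - vol B t"
    unfolding flux_def vol_def by (simp add: sum_subtractf[symmetric] case_prod_unfold)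
  ultimately show ?thesis unfolding vol_def[abs_def] by simp
qed

text \<open>Cauchy-Schwarz against the energy identity: \<open>flux\<^sup>2 \<le> 2 \<cdot> volume \<cdot> p(s0)\<close>.\<close>
lemma flux_Cauchy_Schwarz: assumes t: "t \<ge> 0"
  shows "(flux arcs t)\<^sup>2 \<le> 2 * vol arcs t * p t s0"
proof -
  let ?a = "\<lambda>(v, u). sqrt (L {u, v} * D t {u, v})"
  let ?b = "\<lambda>(v, u). sqrt (D t {u, v} / L {u, v}) * \<bar>p t v - p t u\<bar>"
  have pos: "L {u, v} > 0" "D t {u, v} > 0" if "(v, u) \<in> arcs" for u v
    using that L_pos D_pos t by (auto simp: arcs_iff)
  have ab: "?a x * ?b x = (case x of (v, u) \<Rightarrow> D t {u, v} * \<bar>p t v - p t u\<bar>)" if "x \<in> arcs" for x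
  proof -
    obtain v u where vu: "x = (v, u)" by (cases x)
    note pos = pos[OF that[unfolded vu]]
    have "sqrt (L {u, v} * D t {u, v}) * sqrt (D t {u, v} / L {u, v}) = sqrt ((D t {u, v})\<^sup>2)"
      by (subst real_sqrt_mult[symmetric]) (use pos in \<open>simp add: power2_eq_square\<close>)
    also have "\<dots> = D t {u, v}" using pos by simp
    finally show ?thesis using vu by (simp add: mult.assoc[symmetric])
  qed
  have a2: "(?a x)\<^sup>2 = (case x of (v, u) \<Rightarrow> L {u, v} * D t {u, v})" if "x \<in> arcs" for x
    using that pos by (cases x) (auto simp: less_imp_le)
  have b2: "(?b x)\<^sup>2 = (case x of (v, u) \<Rightarrow> cond t v u * (p t v - p t u)\<^sup>2)" if "x \<in> arcs" for x
    using that pos by (cases x) (auto simp: less_imp_le power_mult_distrib cond_def)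
  have "(flux arcs t)\<^sup>2 = (\<Sum>x\<in>arcs. ?a x * ?b x)\<^sup>2"
    unfolding flux_def using ab by (intro arg_cong[where f="\<lambda>y. y\<^sup>2"] sum.cong) auto
  also have "\<dots> \<le> (\<Sum>x\<in>arcs. (?a x)\<^sup>2) * (\<Sum>x\<in>arcs. (?b x)\<^sup>2)" by (rule Cauchy_Schwarz_ineq_sum)
  also have "(\<Sum>x\<in>arcs. (?a x)\<^sup>2) = vol arcs t" unfolding vol_def using a2 by (rule sum.cong[OF refl])
  also have "(\<Sum>x\<in>arcs. (?b x)\<^sup>2) = 2 * p t s0"
    unfolding energy_identity[OF t, symmetric] using b2 by (rule sum.cong[OF refl])
  finally show ?thesis by simp
qed

end

section \<open>The unique shortest path\<close>

locale physarum_unique_shortest_path = physarum N E L s0 s1 D p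
  for N :: "'a set" and E :: "'a set set" and L :: "'a set \<Rightarrow> real" and s0 s1 :: 'a
    and D :: "real \<Rightarrow> 'a set \<Rightarrow> real" and p :: "real \<Rightarrow> 'a \<Rightarrow> real" +
  fixes P0 :: "'a list"
  assumes shortest: "shortest_path E L s0 s1 P0"
    and unique: "\<forall>P. shortest_path E L s0 s1 P \<longrightarrow> P = P0"
begin

definition hops :: nat where "hops = length P0 - 1"
definition pedge :: "nat \<Rightarrow> 'a set" where "pedge i = {P0 ! i, P0 ! Suc i}"
definition Le :: "nat \<Rightarrow> real" where "Le i = L (pedge i)"
definition Lstar :: real where "Lstar = path_len L P0"
definition path_edges :: "'a set set" where "path_edges = pedge ` {..<hops}"

lemma P0_path: "is_path E s0 s1 P0" using shortest by (simp add: shortest_path_def)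

lemma P0_facts: "P0 \<noteq> []" "distinct P0" "length P0 = Suc hops" "P0 ! 0 = s0" "P0 ! hops = s1"
  using P0_path by (auto simp: is_path_def walk_def hops_def hd_conv_nth last_conv_nth)

lemma hops_pos: "hops \<ge> 1"
  using P0_facts s0_ne_s1 by (cases hops) auto

lemma nth_P0_eq_iff: "i \<le> hops \<Longrightarrow> j \<le> hops \<Longrightarrow> P0 ! i = P0 ! j \<longleftrightarrow> i = j"
  using P0_facts by (simp add: nth_eq_iff_index_eq)

lemma pedge_E: "i < hops \<Longrightarrow> pedge i \<in> E"
  using P0_path P0_facts by (auto simp: is_path_def walk_def pedge_def)

lemma Le_pos: "i < hops \<Longrightarrow> Le i > 0"
  using pedge_E L_pos by (auto simp: Le_def)

lemma Lstar_sum: "Lstar = (\<Sum>i<hops. Le i)"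
  by (simp add: Lstar_def path_len_def hops_def Le_def pedge_def)

lemma Lstar_pos: "Lstar > 0"
  unfolding Lstar_sum using hops_pos Le_pos by (intro sum_pos) (auto simp: lessThan_empty_iff)

lemma Lstar_le_path_len: "is_path E s0 s1 Q \<Longrightarrow> Lstar \<le> path_len L Q"
  using shortest by (auto simp: shortest_path_def Lstar_def)

lemma path_len_P0_suffix:
  assumes "j \<le> hops"
  shows "path_len w (drop j P0) = (\<Sum>i\<in>{j..<hops}. w (pedge i))"
proof -
  have "path_len w (drop j P0) = (\<Sum>i<hops - j. w (pedge (j + i)))"
    unfolding path_len_def pedge_def using P0_facts assms by (intro sum.cong) auto
  also have "\<dots> = (\<Sum>i\<in>(\<lambda>i. j + i) ` {..<hops - j}. w (pedge i))"
    by (subst sum.reindex) (auto simp: inj_on_def)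
  also have "(\<lambda>i. j + i) ` {..<hops - j} = {j..<hops}"
  proof (intro set_eqI iffI)
    fix x assume "x \<in> {j..<hops}"
    then show "x \<in> (\<lambda>i. j + i) ` {..<hops - j}" by (intro image_eqI[of _ _ "x - j"]) auto
  qed auto
  finally show ?thesis .
qed

lemma L_nonneg: "\<forall>e\<in>E. L e \<ge> 0" using L_pos by (auto simp: less_imp_le)

text \<open>Subpaths of shortest paths are shortest: the distance from the \<open>j\<close>-th vertex of
  \<open>P0\<close> to the sink is the length of the remaining part of \<open>P0\<close>.\<close>
lemma dist_along_P0:
  assumes j: "j \<le> hops"
  shows "dist_L E L (P0 ! j) s1 = (\<Sum>i\<in>{j..<hops}. Le i)"
proof (rule antisym)
  have "is_path E (P0 ! j) s1 (drop j P0)"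
    using path_drop[OF P0_path] j P0_facts by simp
  from dist_le_path_len[OF s1_N this]
  show "dist_L E L (P0 ! j) s1 \<le> (\<Sum>i\<in>{j..<hops}. Le i)"
    using path_len_P0_suffix[OF j] by (simp add: Le_def)
next
  have prefix: "dist_L E L s0 s1 \<le> (\<Sum>i<j'. Le i) + dist_L E L (P0 ! j') s1" if "j' \<le> hops" for j'
    using that
  proof (induction j')
    case 0 then show ?case using P0_facts by simp
  next
    case (Suc j')
    have "dist_L E L (P0 ! j') s1 \<le> L (pedge j') + dist_L E L (P0 ! Suc j') s1"
      using dist_edge_Lipschitz[OF s1_N L_nonneg] pedge_E[of j'] Suc.prems
      by (auto simp: pedge_def)
    then show ?case using Suc by (simp add: Le_def)
  qed
  obtain Q where "is_path E s0 s1 Q" "path_len L Q = dist_L E L s0 s1"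
    using dist_attained[OF s1_N P0_path] .
  then have "Lstar \<le> dist_L E L s0 s1" using Lstar_le_path_len by metis
  moreover have "(\<Sum>i<hops. Le i) = (\<Sum>i<j. Le i) + (\<Sum>i\<in>{j..<hops}. Le i)"
    using sum.atLeastLessThan_concat[of 0 j hops Le] j by (simp add: atLeast0LessThan)
  ultimately show "(\<Sum>i\<in>{j..<hops}. Le i) \<le> dist_L E L (P0 ! j) s1"
    using prefix[OF j] Lstar_sum by linarith
qed

text \<open>By uniqueness every other \<open>s0\<close>-\<open>s1\<close> path is strictly longer; since there are
  finitely many, there is a uniform relative gap \<open>eps\<close>: shrinking every edge off \<open>P0\<close>
  by the factor \<open>1 - eps\<close> (lengths \<open>Lpert\<close>) still leaves \<open>P0\<close> a shortest path.\<close>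
definition other_paths :: "'a list set" where
  "other_paths = {Q. is_path E s0 s1 Q \<and> Q \<noteq> P0}"
definition eps :: real where
  "eps = (if other_paths = {} then 1/2
          else min (1/2) (Min ((\<lambda>Q. 1 - Lstar / path_len L Q) ` other_paths)))"
definition Lpert :: "'a set \<Rightarrow> real" where
  "Lpert e = (if e \<in> path_edges then L e else (1 - eps) * L e)"

lemma other_paths_longer: "Q \<in> other_paths \<Longrightarrow> path_len L Q > Lstar"
proof (rule ccontr)
  assume Q: "Q \<in> other_paths" "\<not> Lstar < path_len L Q"
  have "shortest_path E L s0 s1 Q"
    unfolding shortest_path_def using Q Lstar_le_path_len by (force simp: other_paths_def)
  then show False using unique Q by (auto simp: other_paths_def)
qed

lemma finite_other_paths: "finite other_paths" unfolding other_paths_def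
  by (rule finite_subset[OF _ finite_paths[OF s1_N]]) auto

lemma eps_pos: "eps > 0" and eps_le: "eps \<le> 1/2"
  and eps_gap: "Q \<in> other_paths \<Longrightarrow> (1 - eps) * path_len L Q \<ge> Lstar"
proof -
  have pos: "1 - Lstar / path_len L Q > 0" if "Q \<in> other_paths" for Q
  proof -
    have "path_len L Q > Lstar" "Lstar > 0" using that other_paths_longer Lstar_pos by auto
    then show ?thesis by (simp add: field_simps)
  qed
  show "eps > 0"
  proof (cases "other_paths = {}")
    case False
    then have "Min ((\<lambda>Q. 1 - Lstar / path_len L Q) ` other_paths) > 0"
      using finite_other_paths pos by (subst Min_gr_iff) auto
    then show ?thesis using False by (simp add: eps_def)
  qed (simp add: eps_def)
  show "eps \<le> 1/2" unfolding eps_def using min.cobounded1 by (auto simp del: min_less_iff_conj)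
  assume Q: "Q \<in> other_paths"
  then have "eps \<le> 1 - Lstar / path_len L Q"
    unfolding eps_def using finite_other_paths by (auto intro!: min.coboundedI2 Min_le)
  moreover have "path_len L Q > 0" using other_paths_longer[OF Q] Lstar_pos by simp
  ultimately have "(1 - eps) * path_len L Q \<ge> (Lstar / path_len L Q) * path_len L Q"
    by (intro mult_right_mono) auto
  then show "(1 - eps) * path_len L Q \<ge> Lstar" using \<open>path_len L Q > 0\<close> by simp
qed

lemma Lpert_nonneg: "\<forall>e\<in>E. Lpert e \<ge> 0"
  using L_pos eps_le by (auto simp: Lpert_def less_imp_le)

lemma Lpert_ge: "e \<in> E \<Longrightarrow> Lpert e \<ge> (1 - eps) * L e"
  using L_pos[of e] eps_pos by (auto simp: Lpert_def mult_le_cancel_right1 less_imp_le)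

text \<open>The distance to the sink w.r.t. the shrunk lengths; it is the vertex function
  \<open>\<phi>\<close> fed into the Kirchhoff identity in step (2).\<close>
definition dpert :: "'a \<Rightarrow> real" where "dpert v = dist_L E Lpert v s1"

lemma dpert_Lipschitz: "{u, v} \<in> E \<Longrightarrow> dpert u \<le> Lpert {u, v} + dpert v"
  unfolding dpert_def by (rule dist_edge_Lipschitz[OF s1_N Lpert_nonneg])

lemma dpert_s1: "dpert s1 \<le> 0"
proof -
  have "is_path E s1 s1 [s1]" by (simp add: is_path_def walk_def)
  from dist_le_path_len[OF s1_N this, of Lpert] show ?thesis by (simp add: dpert_def path_len_def)
qed

lemma dpert_s0: "dpert s0 \<ge> Lstar"
proof -
  obtain Q where Q: "is_path E s0 s1 Q" "path_len Lpert Q = dpert s0"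
    using dist_attained[OF s1_N P0_path] unfolding dpert_def .
  show ?thesis
  proof (cases "Q = P0")
    case True
    have "path_len Lpert P0 = path_len L P0"
      unfolding path_len_def using P0_facts
      by (intro sum.cong) (auto simp: Lpert_def path_edges_def pedge_def hops_def)
    then show ?thesis using True Q by (simp add: Lstar_def)
  next
    case False
    then have "Q \<in> other_paths" using Q by (simp add: other_paths_def)
    have "(1 - eps) * path_len L Q \<le> path_len Lpert Q"
      unfolding path_len_def sum_distrib_left
      using Q(1) by (intro sum_mono Lpert_ge) (auto simp: is_path_def walk_def)
    then show ?thesis using eps_gap[OF \<open>Q \<in> other_paths\<close>] Q by simp
  qed
qed

end

context physarum_unique_shortest_path
begin

definition fwd :: "nat \<Rightarrow> 'a \<times> 'a" where "fwd i = (P0 ! i, P0 ! Suc i)"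
definition bwd :: "nat \<Rightarrow> 'a \<times> 'a" where "bwd i = (P0 ! Suc i, P0 ! i)"
definition path_arcs :: "('a \<times> 'a) set" where
  "path_arcs = {(v, u) \<in> arcs. {u, v} \<in> path_edges}"
definition off_arcs :: "('a \<times> 'a) set" where
  "off_arcs = {(v, u) \<in> arcs. {u, v} \<notin> path_edges}"

lemma off_arcs_sub: "off_arcs \<subseteq> arcs" by (auto simp: off_arcs_def)

lemma path_arcs_eq: "path_arcs = fwd ` {..<hops} \<union> bwd ` {..<hops}"
proof (intro set_eqI iffI)
  fix x assume "x \<in> path_arcs"
  then obtain v u i where x: "x = (v, u)" "i < hops" "{u, v} = pedge i"
    by (auto simp: path_arcs_def path_edges_def)
  then show "x \<in> fwd ` {..<hops} \<union> bwd ` {..<hops}"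
    by (auto simp: pedge_def doubleton_eq_iff fwd_def bwd_def)
next
  fix x assume "x \<in> fwd ` {..<hops} \<union> bwd ` {..<hops}"
  then show "x \<in> path_arcs"
    using pedge_E
    by (auto simp: path_arcs_def path_edges_def fwd_def bwd_def arcs_iff pedge_def insert_commute)
qed

lemma sum_path_arcs: "(\<Sum>x\<in>path_arcs. f x) = (\<Sum>i<hops. f (fwd i)) + (\<Sum>i<hops. f (bwd i))"
proof -
  have inj1: "inj_on fwd {..<hops}" and inj2: "inj_on bwd {..<hops}"
    using nth_P0_eq_iff by (auto simp: inj_on_def fwd_def bwd_def)
  have disj: "fwd ` {..<hops} \<inter> bwd ` {..<hops} = {}"
  proof (rule ccontr)
    assume "fwd ` {..<hops} \<inter> bwd ` {..<hops} \<noteq> {}"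
    then obtain i j where "i < hops" "j < hops" "P0 ! i = P0 ! Suc j" "P0 ! Suc i = P0 ! j"
      by (auto simp: fwd_def bwd_def)
    then have "i = Suc j" "Suc i = j"
      using nth_P0_eq_iff[of i "Suc j"] nth_P0_eq_iff[of "Suc i" j] by auto
    then show False by simp
  qed
  show ?thesis unfolding path_arcs_eq
    by (subst sum.union_disjoint) (use disj inj1 inj2 in \<open>auto simp: sum.reindex\<close>)
qed

lemma sum_arcs_split: "(\<Sum>x\<in>arcs. f x) = (\<Sum>x\<in>path_arcs. f x) + (\<Sum>x\<in>off_arcs. f x)"
proof -
  have "finite path_arcs" "finite off_arcs"
    unfolding path_arcs_def off_arcs_def by (auto intro: finite_subset[OF _ finite_arcs])
  moreover have "arcs = path_arcs \<union> off_arcs" "path_arcs \<inter> off_arcs = {}"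
    by (auto simp: path_arcs_def off_arcs_def)
  ultimately show ?thesis using sum.union_disjoint by metis
qed

definition xi :: "real \<Rightarrow> nat \<Rightarrow> real" where "xi t i = D t (pedge i)"
definition dp :: "real \<Rightarrow> nat \<Rightarrow> real" where "dp t i = p t (P0 ! i) - p t (P0 ! Suc i)"
definition pvar :: "real \<Rightarrow> real" where "pvar t = (\<Sum>i<hops. \<bar>dp t i\<bar>)"

lemma xi_pos: "t \<ge> 0 \<Longrightarrow> i < hops \<Longrightarrow> xi t i > 0"
  using D_pos pedge_E by (auto simp: xi_def)

lemma cond_fwd: "cond t (P0 ! i) (P0 ! Suc i) = xi t i / Le i"
  and cond_bwd: "cond t (P0 ! Suc i) (P0 ! i) = xi t i / Le i"
  by (simp_all add: cond_def xi_def Le_def pedge_def insert_commute)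

lemma potential_telescope: assumes t: "t \<ge> 0" and j: "j \<le> hops"
  shows "p t (P0 ! j) = (\<Sum>i\<in>{j..<hops}. dp t i)"
proof -
  have "(\<Sum>i\<in>{j..<hops}. dp t i) = - (\<Sum>i = j..<hops. p t (P0 ! Suc i) - p t (P0 ! i))"
    unfolding dp_def by (simp add: sum_negf[symmetric])
  also have "\<dots> = p t (P0 ! j) - p t (P0 ! hops)"
    using sum_Suc_diff'[OF j, of "\<lambda>i. p t (P0 ! i)"] by simp
  finally show ?thesis using P0_facts p_s1[OF t] by simp
qed

lemma source_potential_telescope: "t \<ge> 0 \<Longrightarrow> p t s0 = (\<Sum>i<hops. dp t i)"
  using potential_telescope[of t 0] P0_facts by (simp add: atLeast0LessThan)

lemma source_potential_le_pvar: "t \<ge> 0 \<Longrightarrow> p t s0 \<le> pvar t"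
  unfolding source_potential_telescope pvar_def by (rule sum_mono) simp

text \<open>On each arc the perturbed distance changes by at most \<open>Lpert\<close>, and the
  ratio \<open>Lpert / L\<close> is \<open>1\<close> on \<open>P0\<close> and \<open>1 - eps\<close> off \<open>P0\<close>.\<close>
lemma perturbed_flux_eq:
  assumes t: "t \<ge> 0"
  shows "(\<Sum>(v, u)\<in>arcs. Lpert {u, v} / L {u, v} * (D t {u, v} * \<bar>p t v - p t u\<bar>))
       = flux arcs t - eps * flux off_arcs t"
proof -
  let ?f = "\<lambda>(v, u). D t {u, v} * \<bar>p t v - p t u\<bar>"
  have path: "(\<Sum>(v, u)\<in>path_arcs. Lpert {u, v} / L {u, v} * ?f (v, u)) = (\<Sum>x\<in>path_arcs. ?f x)"
    by (intro sum.cong refl)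
       (auto simp: path_arcs_def arcs_iff Lpert_def dest!: L_pos)
  have off: "(\<Sum>(v, u)\<in>off_arcs. Lpert {u, v} / L {u, v} * ?f (v, u)) = (1 - eps) * (\<Sum>x\<in>off_arcs. ?f x)"
    unfolding sum_distrib_left
    by (intro sum.cong refl) (auto simp: off_arcs_def arcs_iff Lpert_def dest!: L_pos)
  show ?thesis
    using sum_arcs_split[of "\<lambda>(v, u). Lpert {u, v} / L {u, v} * ?f (v, u)"] path off
      sum_arcs_split[of ?f]
    unfolding flux_def by (simp add: case_prod_unfold algebra_simps)
qed

lemma flux_lower_bound: assumes t: "t \<ge> 0"
  shows "flux arcs t \<ge> 2 * Lstar + eps * flux off_arcs t"
proof -
  have arc_le: "(dpert v - dpert u) * cond t v u * (p t v - p t u)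
      \<le> Lpert {u, v} / L {u, v} * (D t {u, v} * \<bar>p t v - p t u\<bar>)" if "(v, u) \<in> arcs" for v u
  proof -
    have e: "{u, v} \<in> E" "{v, u} \<in> E" using that by (auto simp: arcs_iff insert_commute)
    have pos: "L {u, v} > 0" "D t {u, v} > 0" using e L_pos D_pos t by auto
    have "\<bar>dpert v - dpert u\<bar> \<le> Lpert {u, v}"
      using dpert_Lipschitz[OF e(1)] dpert_Lipschitz[OF e(2)] by (auto simp: insert_commute)
    then have "\<bar>dpert v - dpert u\<bar> * \<bar>cond t v u * (p t v - p t u)\<bar>
        \<le> Lpert {u, v} * \<bar>cond t v u * (p t v - p t u)\<bar>"
      by (rule mult_right_mono) simp
    moreover have "\<bar>cond t v u * (p t v - p t u)\<bar> = D t {u, v} / L {u, v} * \<bar>p t v - p t u\<bar>"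
      using pos by (simp add: cond_def abs_mult)
    moreover have "(dpert v - dpert u) * (cond t v u * (p t v - p t u))
        \<le> \<bar>dpert v - dpert u\<bar> * \<bar>cond t v u * (p t v - p t u)\<bar>"
      by (metis abs_ge_self abs_mult)
    ultimately show ?thesis by (simp add: mult.assoc)
  qed
  have "2 * Lstar \<le> 2 * (dpert s0 - dpert s1)" using dpert_s0 dpert_s1 by simp
  also have "\<dots> = (\<Sum>(v, u)\<in>arcs. (dpert v - dpert u) * cond t v u * (p t v - p t u))"
    by (rule kirchhoff_potential_identity[OF t, symmetric])
  also have "\<dots> \<le> (\<Sum>(v, u)\<in>arcs. Lpert {u, v} / L {u, v} * (D t {u, v} * \<bar>p t v - p t u\<bar>))"
    by (rule sum_mono) (use arc_le in auto)
  also have "\<dots> = flux arcs t - eps * flux off_arcs t" by (rule perturbed_flux_eq[OF t])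
  finally show ?thesis by simp
qed

text \<open>The part of the energy carried by \<open>P0\<close> is at most the total energy \<open>2 p(s0)\<close>
  (each path edge is counted twice in the arc sum).\<close>
lemma path_energy_le: assumes t: "t \<ge> 0"
  shows "(\<Sum>i<hops. xi t i / Le i * (dp t i)\<^sup>2) \<le> p t s0"
proof -
  let ?g = "\<lambda>(v, u). cond t v u * (p t v - p t u)\<^sup>2"
  have "(\<Sum>x\<in>path_arcs. ?g x) = (\<Sum>i<hops. ?g (fwd i)) + (\<Sum>i<hops. ?g (bwd i))"
    by (rule sum_path_arcs)
  also have "\<dots> = 2 * (\<Sum>i<hops. xi t i / Le i * (dp t i)\<^sup>2)"
    by (simp add: fwd_def bwd_def cond_fwd cond_bwd dp_def power2_commute)
  finally have path: "(\<Sum>x\<in>path_arcs. ?g x) = 2 * (\<Sum>i<hops. xi t i / Le i * (dp t i)\<^sup>2)" .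
  have "(\<Sum>x\<in>off_arcs. ?g x) \<ge> 0"
    using cond_pos[OF _ t] by (intro sum_nonneg) (auto simp: off_arcs_def less_imp_le)
  then show ?thesis using path sum_arcs_split[of ?g] energy_identity[OF t] by simp
qed

text \<open>Cauchy-Schwarz along \<open>P0\<close>: the source potential is at most the resistance
  \<open>\<Sum> L_i / x_i\<close> of the path.\<close>
lemma source_potential_le_resistance: assumes t: "t \<ge> 0"
  shows "p t s0 \<le> (\<Sum>i<hops. Le i / xi t i)"
proof -
  let ?a = "\<lambda>i. sqrt (Le i / xi t i)" and ?b = "\<lambda>i. sqrt (xi t i / Le i) * dp t i"
  have pos: "Le i > 0" "xi t i > 0" if "i < hops" for i using that Le_pos xi_pos t by auto
  have ab: "?a i * ?b i = dp t i" if "i < hops" for i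
  proof -
    have "sqrt (Le i / xi t i) * sqrt (xi t i / Le i) = 1"
      using pos[OF that] by (subst real_sqrt_mult[symmetric]) simp
    then show ?thesis by (simp add: mult.assoc[symmetric])
  qed
  have "(\<Sum>i<hops. ?a i * ?b i) = (\<Sum>i<hops. dp t i)" using ab by (intro sum.cong) auto
  then have "(p t s0)\<^sup>2 = (\<Sum>i<hops. ?a i * ?b i)\<^sup>2"
    using source_potential_telescope[OF t] by simp
  also have "\<dots> \<le> (\<Sum>i<hops. (?a i)\<^sup>2) * (\<Sum>i<hops. (?b i)\<^sup>2)" by (rule Cauchy_Schwarz_ineq_sum)
  also have "(\<Sum>i<hops. (?a i)\<^sup>2) = (\<Sum>i<hops. Le i / xi t i)"
    using pos by (intro sum.cong) (auto simp: less_imp_le)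
  also have "(\<Sum>i<hops. (?b i)\<^sup>2) = (\<Sum>i<hops. xi t i / Le i * (dp t i)\<^sup>2)"
    using pos by (intro sum.cong) (auto simp: less_imp_le power_mult_distrib)
  also have "(\<Sum>i<hops. Le i / xi t i) * \<dots> \<le> (\<Sum>i<hops. Le i / xi t i) * p t s0"
    using pos by (intro mult_left_mono path_energy_le[OF t] sum_nonneg) (auto simp: less_imp_le)
  finally have "p t s0 * p t s0 \<le> (\<Sum>i<hops. Le i / xi t i) * p t s0"
    by (simp add: power2_eq_square)
  moreover have "(\<Sum>i<hops. Le i / xi t i) \<ge> 0"
    using pos by (intro sum_nonneg) (simp add: less_imp_le)
  ultimately show ?thesis
    using source_potential_nonneg[OF t]
    by (cases "p t s0 > 0") (auto intro: mult_right_le_imp_le)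
qed

lemma path_edge_volume_le: assumes t: "t \<ge> 0" and i: "i < hops"
  shows "Le i * xi t i \<le> vol arcs t"
  using arc_volume_le[of "P0 ! Suc i" "P0 ! i" arcs t] pedge_E[OF i] t
  by (simp add: arcs_iff Le_def xi_def pedge_def insert_commute)

lemma vol_pos: assumes t: "t \<ge> 0" shows "vol arcs t > 0"
proof -
  have "0 < hops" using hops_pos by simp
  then have "0 < Le 0 * xi t 0" using Le_pos xi_pos[OF t] by simp
  also have "\<dots> \<le> vol arcs t" using path_edge_volume_le[OF t \<open>0 < hops\<close>] .
  finally show ?thesis .
qed

end

section \<open>The Lyapunov function and global bounds\<close>

context physarum_unique_shortest_path
begin

lemma xi_deriv: assumes t: "t \<ge> 0" and i: "i < hops"
  shows "((\<lambda>\<tau>. xi \<tau> i) has_real_derivative (xi t i * \<bar>dp t i\<bar> / Le i - xi t i)) (at t within {0..})"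
proof -
  have e: "{P0 ! i, P0 ! Suc i} \<in> E" using pedge_E[OF i] by (simp add: pedge_def)
  have "\<bar>D t {P0 ! i, P0 ! Suc i} * (p t (P0 ! i) - p t (P0 ! Suc i)) / L {P0 ! i, P0 ! Suc i}\<bar>
      = xi t i * \<bar>dp t i\<bar> / Le i"
    using D_pos[OF e t] L_pos[OF e] by (simp add: abs_mult xi_def dp_def Le_def pedge_def)
  then show ?thesis using D_deriv[OF e t] by (simp add: xi_def pedge_def Le_def)
qed

definition W :: "real \<Rightarrow> real" where "W t = (\<Sum>i<hops. Le i * ln (xi t i))"
definition F :: "real \<Rightarrow> real" where "F t = W t - Lstar * ln (vol arcs t)"
definition Fd :: "real \<Rightarrow> real" where "Fd t = pvar t - Lstar * flux arcs t / vol arcs t"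

lemma W_deriv: assumes t: "t \<ge> 0"
  shows "(W has_real_derivative (pvar t - Lstar)) (at t within {0..})"
proof -
  have "((\<lambda>\<tau>. \<Sum>i<hops. Le i * ln (xi \<tau> i)) has_real_derivative (\<Sum>i<hops. \<bar>dp t i\<bar> - Le i))
      (at t within {0..})"
  proof (rule DERIV_sum)
    fix i assume "i \<in> {..<hops}"
    then have i: "i < hops" by simp
    have pos: "xi t i > 0" "Le i > 0" using xi_pos[OF t i] Le_pos[OF i] by auto
    have "((\<lambda>\<tau>. Le i * ln (xi \<tau> i)) has_real_derivative
        Le i * (1 / xi t i * (xi t i * \<bar>dp t i\<bar> / Le i - xi t i))) (at t within {0..})"
      by (rule DERIV_cmult DERIV_ln_divide[unfolded divide_inverse] xi_deriv[OF t i] pos |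
          rule derivative_eq_intros)+ (use pos in simp)
    moreover have "Le i * (1 / xi t i * (xi t i * \<bar>dp t i\<bar> / Le i - xi t i)) = \<bar>dp t i\<bar> - Le i"
      using pos by (simp add: field_simps)
    ultimately show "((\<lambda>\<tau>. Le i * ln (xi \<tau> i)) has_real_derivative (\<bar>dp t i\<bar> - Le i))
        (at t within {0..})"
      by simp
  qed
  then show ?thesis unfolding W_def[abs_def] pvar_def Lstar_sum by (simp add: sum_subtractf)
qed

lemma F_deriv: assumes t: "t \<ge> 0"
  shows "(F has_real_derivative Fd t) (at t within {0..})"
proof -
  have V: "vol arcs t > 0" by (rule vol_pos[OF t])
  have "((\<lambda>\<tau>. W \<tau> - Lstar * ln (vol arcs \<tau>)) has_real_derivative
      ((pvar t - Lstar) - Lstar * (1 / vol arcs t * (flux arcs t - vol arcs t)))) (at t within {0..})"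
    by (rule derivative_eq_intros W_deriv[OF t] vol_deriv[OF subset_refl t] refl | use V in simp)+
  moreover have "(pvar t - Lstar) - Lstar * (1 / vol arcs t * (flux arcs t - vol arcs t)) = Fd t"
    using V by (simp add: Fd_def field_simps)
  ultimately show ?thesis unfolding F_def[abs_def] by simp
qed

text \<open>The derivative of \<open>F\<close> dominates the flux off \<open>P0\<close>: combining
  \<open>pvar \<ge> p(s0) \<ge> S\<^sup>2 / (2V)\<close> (Cauchy-Schwarz) with \<open>S \<ge> 2 L* + eps S_O\<close> (step 2).\<close>
lemma Fd_ge: assumes t: "t \<ge> 0"
  shows "Fd t \<ge> Lstar * eps * flux off_arcs t / vol arcs t"
proof -
  let ?S = "flux arcs t" and ?SO = "flux off_arcs t" and ?V = "vol arcs t"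
  have V: "?V > 0" by (rule vol_pos[OF t])
  have gap: "eps * ?SO \<ge> 0" using flux_nonneg[OF off_arcs_sub t] eps_pos by simp
  have "p t s0 * ?V \<le> pvar t * ?V" using source_potential_le_pvar[OF t] V by (simp add: mult_right_mono)
  then have "?S\<^sup>2 \<le> 2 * (pvar t * ?V)" using flux_Cauchy_Schwarz[OF t] by (simp add: algebra_simps)
  then have "pvar t \<ge> ?S\<^sup>2 / (2 * ?V)" using V by (simp add: field_simps)
  then have "Fd t \<ge> (?S\<^sup>2 - 2 * Lstar * ?S) / (2 * ?V)"
    unfolding Fd_def using V by (simp add: field_simps)
  moreover have "?S * (?S - 2 * Lstar) \<ge> (2 * Lstar) * (eps * ?SO)"
    using flux_lower_bound[OF t] Lstar_pos gap by (intro mult_mono) auto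
  then have "?S\<^sup>2 - 2 * Lstar * ?S \<ge> 2 * Lstar * (eps * ?SO)"
    by (simp add: power2_eq_square algebra_simps)
  ultimately have "Fd t \<ge> 2 * Lstar * (eps * ?SO) / (2 * ?V)"
    using V by (smt (verit) divide_right_mono)
  then show ?thesis by simp
qed

lemma F_mono: assumes "0 \<le> s" "s \<le> t" shows "F s \<le> F t"
proof (rule nondecreasing_from_deriv[OF assms F_deriv])
  fix r :: real assume "r \<ge> s"
  then have r: "r \<ge> 0" using assms by simp
  have "Lstar * eps * flux off_arcs r / vol arcs r \<ge> 0"
    using flux_nonneg[OF off_arcs_sub r] vol_pos[OF r] Lstar_pos eps_pos by simp
  then show "Fd r \<ge> 0" using Fd_ge[OF r] by linarith
qed (use assms in auto)

text \<open>\<open>F\<close> is a sum of the terms \<open>L_i ln (L_i x_i / V)\<close>, each nonpositive since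
  \<open>L_i x_i \<le> V\<close>, shifted by a constant.  Hence \<open>F\<close> is bounded above by \<open>Fmax\<close>, and since
  \<open>F\<close> does not decrease, no term can drop below \<open>F 0 - Fmax\<close>.\<close>
definition Fmax :: real where "Fmax = - (\<Sum>i<hops. Le i * ln (Le i))"

lemma scaled_log_nonpos: assumes t: "t \<ge> 0" and i: "i < hops"
  shows "Le i * ln (Le i * xi t i / vol arcs t) \<le> 0"
proof -
  have "0 < Le i * xi t i" using Le_pos[OF i] xi_pos[OF t i] by simp
  then have "ln (Le i * xi t i / vol arcs t) \<le> 0"
    using path_edge_volume_le[OF t i] vol_pos[OF t] by simp
  then show ?thesis using Le_pos[OF i] by (simp add: mult_nonneg_nonpos less_imp_le)
qed

lemma sum_scaled_log: assumes t: "t \<ge> 0"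
  shows "(\<Sum>i<hops. Le i * ln (Le i * xi t i / vol arcs t)) = F t - Fmax"
proof -
  have "Le i * ln (Le i * xi t i / vol arcs t) = Le i * ln (xi t i) + Le i * ln (Le i) - Le i * ln (vol arcs t)"
    if "i < hops" for i
    using Le_pos[OF that] xi_pos[OF t that] vol_pos[OF t] by (simp add: ln_mult ln_div algebra_simps)
  then have "(\<Sum>i<hops. Le i * ln (Le i * xi t i / vol arcs t))
      = (\<Sum>i<hops. Le i * ln (xi t i) + Le i * ln (Le i) - Le i * ln (vol arcs t))"
    by (intro sum.cong) auto
  then show ?thesis
    unfolding F_def W_def Fmax_def Lstar_sum by (simp add: sum.distrib sum_subtractf sum_distrib_right)
qed

lemma F_upper: "t \<ge> 0 \<Longrightarrow> F t \<le> Fmax"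
  using sum_scaled_log[of t] scaled_log_nonpos[of t] by (smt (verit) lessThan_iff sum_nonpos)

lemma scaled_log_lower: assumes t: "t \<ge> 0" and i: "i < hops"
  shows "Le i * ln (Le i * xi t i / vol arcs t) \<ge> F 0 - Fmax"
proof -
  let ?a = "\<lambda>j. Le j * ln (Le j * xi t j / vol arcs t)"
  have "(\<Sum>j<hops. ?a j) = ?a i + (\<Sum>j\<in>{..<hops} - {i}. ?a j)"
    using i by (subst sum.remove[of _ i]) auto
  moreover have "(\<Sum>j\<in>{..<hops} - {i}. ?a j) \<le> 0"
    using scaled_log_nonpos[OF t] by (intro sum_nonpos) auto
  moreover have "F 0 \<le> F t" using F_mono[OF _ t] by simp
  ultimately show ?thesis using sum_scaled_log[OF t] by linarith
qed

definition Cf :: real where "Cf = Fmax - F 0"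

lemma path_resistance_bound: assumes t: "t \<ge> 0" and i: "i < hops"
  shows "Le i / xi t i \<le> (Le i)\<^sup>2 * exp (Cf / Le i) / vol arcs t"
proof -
  have V: "vol arcs t > 0" and l: "Le i > 0" and x: "xi t i > 0"
    using vol_pos[OF t] Le_pos[OF i] xi_pos[OF t i] by auto
  have "ln (Le i * xi t i / vol arcs t) \<ge> - Cf / Le i"
    using scaled_log_lower[OF t i] l by (simp add: Cf_def field_simps)
  then have "Le i * xi t i / vol arcs t \<ge> exp (- Cf / Le i)"
    using V l x by (metis exp_le_cancel_iff exp_ln divide_pos_pos mult_pos_pos)
  then have "Le i * xi t i \<ge> vol arcs t * exp (- Cf / Le i)" using V by (simp add: field_simps)
  then have "Le i / xi t i \<le> Le i / (vol arcs t * exp (- Cf / Le i) / Le i)"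
    using V l x by (intro divide_left_mono) (auto simp: field_simps)
  also have "\<dots> = (Le i)\<^sup>2 * exp (Cf / Le i) / vol arcs t"
    using V l by (simp add: field_simps power2_eq_square exp_minus)
  finally show ?thesis .
qed

definition R0 :: real where "R0 = (\<Sum>i<hops. (Le i)\<^sup>2 * exp (Cf / Le i))"

lemma source_potential_bound: assumes t: "t \<ge> 0" shows "p t s0 \<le> R0 / vol arcs t"
proof -
  have "p t s0 \<le> (\<Sum>i<hops. Le i / xi t i)" by (rule source_potential_le_resistance[OF t])
  also have "\<dots> \<le> (\<Sum>i<hops. (Le i)\<^sup>2 * exp (Cf / Le i) / vol arcs t)"
    by (rule sum_mono) (use path_resistance_bound[OF t] in auto)
  also have "\<dots> = R0 / vol arcs t" by (simp add: R0_def sum_divide_distrib)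
  finally show ?thesis .
qed

lemma flux_bound: assumes t: "t \<ge> 0" shows "flux arcs t \<le> sqrt (2 * R0)"
proof -
  have V: "vol arcs t > 0" by (rule vol_pos[OF t])
  have "(flux arcs t)\<^sup>2 \<le> 2 * vol arcs t * p t s0" by (rule flux_Cauchy_Schwarz[OF t])
  also have "\<dots> \<le> 2 * vol arcs t * (R0 / vol arcs t)"
    using source_potential_bound[OF t] V by (intro mult_left_mono) auto
  also have "\<dots> = 2 * R0" using V by simp
  finally show ?thesis using flux_nonneg[OF subset_refl t] by (simp add: real_le_rsqrt)
qed

text \<open>The volume relaxes towards the flux, which lies between \<open>2 L*\<close> and \<open>sqrt (2 R0)\<close>;
  so the volume stays between positive constants and the source potential is bounded.\<close>
definition Vlo :: real where "Vlo = min (vol arcs 0) (2 * Lstar)"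
definition Vhi :: real where "Vhi = max (vol arcs 0) (sqrt (2 * R0))"
definition Pmax :: real where "Pmax = R0 / Vlo"

lemma vol_lower: "t \<ge> 0 \<Longrightarrow> vol arcs t \<ge> Vlo"
  unfolding Vlo_def
proof (rule relaxation_global_lower[OF vol_deriv[OF subset_refl]])
  fix s :: real assume s: "s \<ge> 0"
  have "eps * flux off_arcs s \<ge> 0" using flux_nonneg[OF off_arcs_sub s] eps_pos by simp
  then show "flux arcs s - vol arcs s \<ge> 2 * Lstar - vol arcs s"
    using flux_lower_bound[OF s] by linarith
qed

lemma vol_upper: "t \<ge> 0 \<Longrightarrow> vol arcs t \<le> Vhi"
  unfolding Vhi_def
  by (rule relaxation_global_upper[OF vol_deriv[OF subset_refl]]) (use flux_bound in auto)

lemma Vlo_pos: "Vlo > 0" using vol_pos[of 0] Lstar_pos by (simp add: Vlo_def)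

lemma source_potential_max: assumes t: "t \<ge> 0" shows "p t s0 \<le> Pmax"
proof -
  have "R0 \<ge> 0" unfolding R0_def by (intro sum_nonneg) auto
  then have "R0 / vol arcs t \<le> R0 / Vlo" using vol_lower[OF t] Vlo_pos by (intro divide_left_mono) auto
  then show ?thesis using source_potential_bound[OF t] by (simp add: Pmax_def)
qed

end

section \<open>The volume off the shortest path vanishes\<close>

context physarum_unique_shortest_path
begin

text \<open>Step (4).  With \<open>K = Vhi / (L* eps)\<close> the off-path flux is at most \<open>K F'\<close>, so
  \<open>G = V_O - K F\<close> satisfies \<open>G' = S_O - V_O - K F' \<le> -V_O\<close>.\<close>
definition K :: real where "K = Vhi / (Lstar * eps)"
definition G :: "real \<Rightarrow> real" where "G t = vol off_arcs t - K * F t"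

lemma K_pos: "K > 0"
proof -
  have "Vhi > 0" using vol_upper[of 0] vol_pos[of 0] by simp
  then show ?thesis using Lstar_pos eps_pos by (simp add: K_def)
qed

lemma off_flux_le: assumes t: "t \<ge> 0" shows "flux off_arcs t \<le> K * Fd t"
proof -
  have V: "vol arcs t > 0" using vol_pos[OF t] .
  have c: "Lstar * eps > 0" using Lstar_pos eps_pos by simp
  have "Lstar * eps * flux off_arcs t / Vhi \<le> Lstar * eps * flux off_arcs t / vol arcs t"
    using vol_upper[OF t] V c flux_nonneg[OF off_arcs_sub t] by (intro divide_left_mono) auto
  also have "\<dots> \<le> Fd t" by (rule Fd_ge[OF t])
  finally have "Lstar * eps * flux off_arcs t \<le> Vhi * Fd t"
    using vol_upper[OF t] V by (simp add: field_simps)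
  then show ?thesis using c by (simp add: K_def field_simps)
qed

lemma G_deriv: assumes t: "t \<ge> 0"
  shows "(G has_real_derivative (flux off_arcs t - vol off_arcs t - K * Fd t)) (at t within {0..})"
  unfolding G_def[abs_def]
  by (rule derivative_eq_intros vol_deriv[OF off_arcs_sub t] F_deriv[OF t] refl | simp)+

lemma G_deriv_le: "t \<ge> 0 \<Longrightarrow> flux off_arcs t - vol off_arcs t - K * Fd t \<le> - vol off_arcs t"
  using off_flux_le by simp

lemma G_antitone: assumes "0 \<le> s" "s \<le> t" shows "G t \<le> G s"
proof -
  have "- G s \<le> - G t"
  proof (rule nondecreasing_from_deriv[OF assms])
    fix r :: real assume "r \<ge> s"
    then have r: "r \<ge> 0" using assms by simp
    show "((\<lambda>x. - G x) has_real_derivative - (flux off_arcs r - vol off_arcs r - K * Fd r))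
        (at r within {0..})"
      by (rule DERIV_minus[OF G_deriv[OF r]])
    show "- (flux off_arcs r - vol off_arcs r - K * Fd r) \<ge> 0"
      using G_deriv_le[OF r] vol_nonneg[OF off_arcs_sub r] by simp
  qed
  then show ?thesis by simp
qed

lemma G_lower: assumes t: "t \<ge> 0" shows "G t \<ge> - K * Fmax"
proof -
  have "K * F t \<le> K * Fmax" using F_upper[OF t] K_pos by (intro mult_left_mono) auto
  then show ?thesis using vol_nonneg[OF off_arcs_sub t] by (simp add: G_def)
qed

text \<open>\<open>V_O\<close> decays at most exponentially (its source term is nonnegative), so over a
  unit time interval \<open>G\<close> decreases by at least \<open>V_O(t) / e\<close>.\<close>
lemma off_volume_decay: assumes t: "t \<ge> 0" and s: "t \<le> s"
  shows "vol off_arcs s \<ge> vol off_arcs t * exp (- (s - t))"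
proof -
  have "vol off_arcs s \<ge> 0 + (vol off_arcs t - 0) * exp (- (s - t))"
  proof (rule relaxation_lower_bound[OF t s])
    fix r :: real assume "r \<ge> t"
    then have r: "r \<ge> 0" using t by simp
    show "(vol off_arcs has_real_derivative (flux off_arcs r - vol off_arcs r)) (at r within {0..})"
      by (rule vol_deriv[OF off_arcs_sub r])
    show "flux off_arcs r - vol off_arcs r \<ge> 0 - vol off_arcs r"
      using flux_nonneg[OF off_arcs_sub r] by simp
  qed
  then show ?thesis by simp
qed

lemma off_volume_le_G_step: assumes t: "t \<ge> 0"
  shows "vol off_arcs t * exp (-1) \<le> G t - G (t + 1)"
proof -
  let ?c = "vol off_arcs t * exp (-1)"
  have "(\<lambda>s. - (G s + (s - t) * ?c)) t \<le> (\<lambda>s. - (G s + (s - t) * ?c)) (t + 1)"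
  proof (rule nondecreasing_from_deriv[OF t])
    fix s :: real assume s: "s \<ge> t"
    then have s0: "s \<ge> 0" using t by simp
    show "((\<lambda>s. - (G s + (s - t) * ?c)) has_real_derivative
        - ((flux off_arcs s - vol off_arcs s - K * Fd s) + 1 * ?c)) (at s within {0..})"
      by (rule derivative_eq_intros G_deriv[OF s0] refl | simp)+
    assume "s \<le> t + 1"
    then have "exp (- (s - t)) \<ge> exp (-1)" by simp
    then have "vol off_arcs s \<ge> ?c"
      using off_volume_decay[OF t s] vol_nonneg[OF off_arcs_sub t] by (smt (verit) mult_left_mono)
    then show "- ((flux off_arcs s - vol off_arcs s - K * Fd s) + 1 * ?c) \<ge> 0"
      using G_deriv_le[OF s0] by simp
  qed simp
  then show ?thesis by simp
qed

lemma off_volume_limit: "(vol off_arcs \<longlongrightarrow> 0) at_top"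
proof (rule tendstoI)
  fix e :: real assume e: "e > 0"
  obtain T0 where T0: "T0 \<ge> 0" "\<And>t. t \<ge> T0 \<Longrightarrow> G t - G (t + 1) < e * exp (-1)"
    using antitone_bounded_small_steps[of G "- K * Fmax" "e * exp (-1)"] G_antitone G_lower e
    by auto
  have "\<forall>\<^sub>F t in at_top. t \<ge> T0" by (rule eventually_ge_at_top)
  then show "\<forall>\<^sub>F t in at_top. dist (vol off_arcs t) 0 < e"
  proof eventually_elim
    case (elim t)
    then have t: "t \<ge> 0" using T0 by simp
    have "vol off_arcs t * exp (-1) < e * exp (-1)"
      using off_volume_le_G_step[OF t] T0(2)[OF elim] by linarith
    then have "vol off_arcs t < e" by (simp add: mult_less_cancel_right)
    then show ?case using vol_nonneg[OF off_arcs_sub t] by simp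
  qed
qed

end

section \<open>Convergence of the currents, diameters and potentials\<close>

context physarum_unique_shortest_path
begin

definition current :: "real \<Rightarrow> 'a \<Rightarrow> 'a \<Rightarrow> real" where
  "current t v u = cond t v u * (p t v - p t u)"

text \<open>The energy of a single arc is bounded by the total energy \<open>2 p(s0) \<le> 2 Pmax\<close>, and
  the conductance of an off-path arc is at most \<open>V_O / L\<^sup>2\<close>; hence its current is
  \<open>O(sqrt V_O)\<close> and vanishes.\<close>
lemma current_bound: assumes x: "(v, u) \<in> off_arcs" and t: "t \<ge> 0"
  shows "\<bar>current t v u\<bar> \<le> sqrt (2 * Pmax * vol off_arcs t) / L {u, v}"
proof -
  have xA: "(v, u) \<in> arcs" using x by (simp add: off_arcs_def)
  have l: "L {u, v} > 0" using L_pos xA by (simp add: arcs_iff)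
  have c: "cond t v u > 0" by (rule cond_pos[OF xA t])
  have P: "Pmax \<ge> 0" using source_potential_max[of 0] source_potential_nonneg[of 0] by simp
  have VO: "vol off_arcs t \<ge> 0" by (rule vol_nonneg[OF off_arcs_sub t])
  have "cond t v u * (p t v - p t u)\<^sup>2 \<le> (\<Sum>(v, u)\<in>arcs. cond t v u * (p t v - p t u)\<^sup>2)"
    using member_le_sum[OF xA, of "\<lambda>(v, u). cond t v u * (p t v - p t u)\<^sup>2"] finite_arcs
      cond_pos[OF _ t] by (auto simp: less_imp_le)
  then have energy: "cond t v u * (p t v - p t u)\<^sup>2 \<le> 2 * Pmax"
    using energy_identity[OF t] source_potential_max[OF t] by simp
  have "L {u, v} * D t {u, v} \<le> vol off_arcs t" by (rule arc_volume_le[OF x off_arcs_sub t])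
  then have cond_le: "cond t v u \<le> vol off_arcs t / L {u, v} / L {u, v}"
    using l by (simp add: cond_def field_simps)
  have "(current t v u)\<^sup>2 = cond t v u * (cond t v u * (p t v - p t u)\<^sup>2)"
    by (simp add: current_def power2_eq_square)
  also have "\<dots> \<le> cond t v u * (2 * Pmax)" using energy c by (intro mult_left_mono) auto
  also have "\<dots> \<le> (vol off_arcs t / L {u, v} / L {u, v}) * (2 * Pmax)"
    using cond_le P by (intro mult_right_mono) auto
  also have "\<dots> = (sqrt (2 * Pmax * vol off_arcs t) / L {u, v})\<^sup>2"
    using l P VO by (simp add: power2_eq_square power_divide field_simps)
  finally have "\<bar>current t v u\<bar>\<^sup>2 \<le> (sqrt (2 * Pmax * vol off_arcs t) / L {u, v})\<^sup>2" by simp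
  moreover have "0 \<le> sqrt (2 * Pmax * vol off_arcs t) / L {u, v}" using l P VO by simp
  ultimately show ?thesis by (rule power2_le_imp_le)
qed

lemma current_limit: assumes x: "(v, u) \<in> off_arcs"
  shows "((\<lambda>t. current t v u) \<longlongrightarrow> 0) at_top"
proof -
  have "((\<lambda>t. sqrt (2 * Pmax * vol off_arcs t) / L {u, v}) \<longlongrightarrow> sqrt (2 * Pmax * 0) / L {u, v}) at_top"
    using L_pos[of "{u, v}"] x by (intro tendsto_intros off_volume_limit) (auto simp: off_arcs_def arcs_iff)
  then have lim: "((\<lambda>t. sqrt (2 * Pmax * vol off_arcs t) / L {u, v}) \<longlongrightarrow> 0) at_top" by simp
  have "((\<lambda>t. \<bar>current t v u\<bar>) \<longlongrightarrow> 0) at_top"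
  proof (rule tendsto_sandwich[OF _ _ tendsto_const lim])
    show "\<forall>\<^sub>F t in at_top. \<bar>current t v u\<bar> \<le> sqrt (2 * Pmax * vol off_arcs t) / L {u, v}"
      using eventually_ge_at_top[of 0] by eventually_elim (rule current_bound[OF x])
  qed simp
  then show ?thesis by (simp add: tendsto_rabs_zero_iff)
qed

text \<open>Step (5), the cut argument: the cut separating \<open>P0 ! 0, \<dots>, P0 ! i\<close> from the rest
  carries one unit of flow, on the path edge \<open>i\<close> and on off-path arcs.  Taking
  \<open>\<phi>\<close> the indicator of the first \<open>i + 1\<close> path vertices in the Kirchhoff identity makes this
  precise.\<close>
definition path_current :: "real \<Rightarrow> nat \<Rightarrow> real" where
  "path_current t i = xi t i / Le i * dp t i"

lemma cut_current_balance: assumes t: "t \<ge> 0" and i: "i < hops"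
  shows "\<bar>2 - 2 * path_current t i\<bar> \<le> (\<Sum>(v, u)\<in>off_arcs. \<bar>current t v u\<bar>)"
proof -
  define \<phi> :: "'a \<Rightarrow> real" where "\<phi> v = (if \<exists>j\<le>i. v = P0 ! j then 1 else 0)" for v
  have \<phi>_P0: "\<phi> (P0 ! j) = (if j \<le> i then 1 else 0)" if j: "j \<le> hops" for j
  proof -
    have "(\<exists>j'\<le>i. P0 ! j = P0 ! j') \<longleftrightarrow> j \<le> i"
      using nth_P0_eq_iff[OF j] i by (auto, metis le_trans less_imp_le_nat)
    then show ?thesis by (simp add: \<phi>_def)
  qed
  have "\<phi> s0 = 1" "\<phi> s1 = 0" using \<phi>_P0[of 0] \<phi>_P0[of hops] P0_facts i by auto
  let ?h = "\<lambda>(v, u). (\<phi> v - \<phi> u) * cond t v u * (p t v - p t u)"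
  have total: "(\<Sum>x\<in>arcs. ?h x) = 2"
    using kirchhoff_potential_identity[OF t, of \<phi>] \<open>\<phi> s0 = 1\<close> \<open>\<phi> s1 = 0\<close> by simp
  have fwd: "?h (fwd j) = (if j = i then path_current t i else 0)" if "j < hops" for j
    using \<phi>_P0 that by (auto simp: fwd_def cond_fwd path_current_def dp_def)
  have bwd: "?h (bwd j) = (if j = i then path_current t i else 0)" if "j < hops" for j
    using \<phi>_P0 that by (auto simp: bwd_def cond_bwd path_current_def dp_def algebra_simps)
  have path: "(\<Sum>x\<in>path_arcs. ?h x) = 2 * path_current t i"
    using sum_path_arcs[of ?h] i by (simp add: fwd bwd)
  have "\<bar>\<Sum>x\<in>off_arcs. ?h x\<bar> \<le> (\<Sum>x\<in>off_arcs. \<bar>?h x\<bar>)" by (rule sum_abs)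
  also have "\<dots> \<le> (\<Sum>(v, u)\<in>off_arcs. \<bar>current t v u\<bar>)"
  proof (rule sum_mono)
    fix x assume "x \<in> off_arcs"
    obtain v u where vu: "x = (v, u)" by (cases x)
    have "\<bar>\<phi> v - \<phi> u\<bar> \<le> 1" by (simp add: \<phi>_def)
    then have "\<bar>\<phi> v - \<phi> u\<bar> * \<bar>current t v u\<bar> \<le> 1 * \<bar>current t v u\<bar>" by (intro mult_right_mono) auto
    then show "\<bar>?h x\<bar> \<le> (case x of (v, u) \<Rightarrow> \<bar>current t v u\<bar>)"
      unfolding vu by (simp add: current_def abs_mult mult.assoc)
  qed
  finally show ?thesis using sum_arcs_split[of ?h] total path by simp
qed

lemma path_current_limit: assumes i: "i < hops" shows "((\<lambda>t. path_current t i) \<longlongrightarrow> 1) at_top"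
proof -
  have "((\<lambda>t. (\<Sum>(v, u)\<in>off_arcs. \<bar>current t v u\<bar>)) \<longlongrightarrow> (\<Sum>(v, u)\<in>off_arcs. \<bar>0::real\<bar>)) at_top"
    unfolding case_prod_unfold
    by (intro tendsto_sum tendsto_rabs) (use current_limit in \<open>auto simp: case_prod_unfold\<close>)
  then have lim: "((\<lambda>t. (\<Sum>(v, u)\<in>off_arcs. \<bar>current t v u\<bar>)) \<longlongrightarrow> 0) at_top" by simp
  have "((\<lambda>t. \<bar>2 - 2 * path_current t i\<bar>) \<longlongrightarrow> 0) at_top"
  proof (rule tendsto_sandwich[OF _ _ tendsto_const lim])
    show "\<forall>\<^sub>F t in at_top. \<bar>2 - 2 * path_current t i\<bar> \<le> (\<Sum>(v, u)\<in>off_arcs. \<bar>current t v u\<bar>)"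
      using eventually_ge_at_top[of 0] by eventually_elim (rule cut_current_balance[OF _ i])
  qed simp
  then have "((\<lambda>t. 2 - 2 * path_current t i) \<longlongrightarrow> 0) at_top" by (simp add: tendsto_rabs_zero_iff)
  then have "((\<lambda>t. 1 - (1/2) * (2 - 2 * path_current t i)) \<longlongrightarrow> 1 - (1/2) * 0) at_top"
    by (intro tendsto_intros)
  moreover have "(\<lambda>t. 1 - (1/2) * (2 - 2 * path_current t i)) = (\<lambda>t. path_current t i)"
    by (rule ext) (simp add: field_simps)
  ultimately show ?thesis by simp
qed

text \<open>With the path current tending to 1, the relaxation equation \<open>x_i' = |Q_i| - x_i\<close>
  gives \<open>x_i \<rightarrow> 1\<close>, and then \<open>dp_i = L_i Q_i / x_i \<rightarrow> L_i\<close>.\<close>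
lemma xi_limit: assumes i: "i < hops" shows "((\<lambda>t. xi t i) \<longlongrightarrow> 1) at_top"
proof (rule relaxation_limit)
  show "((\<lambda>t. xi t i) has_real_derivative (xi s i * \<bar>dp s i\<bar> / Le i - xi s i)) (at s within {0..})"
    if "s \<ge> 0" for s
    by (rule xi_deriv[OF that i])
next
  have "((\<lambda>t. \<bar>path_current t i\<bar>) \<longlongrightarrow> \<bar>1\<bar>) at_top" by (intro tendsto_intros path_current_limit[OF i])
  moreover have "\<forall>\<^sub>F t in at_top. \<bar>path_current t i\<bar> = xi t i * \<bar>dp t i\<bar> / Le i"
    using eventually_ge_at_top[of 0]
  proof eventually_elim
    case (elim t)
    then show ?case using xi_pos[OF elim i] Le_pos[OF i] by (simp add: path_current_def abs_mult)
  qed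
  ultimately show "((\<lambda>t. xi t i * \<bar>dp t i\<bar> / Le i) \<longlongrightarrow> 1) at_top"
    by (simp add: tendsto_cong)
qed

lemma dp_limit: assumes i: "i < hops" shows "((\<lambda>t. dp t i) \<longlongrightarrow> Le i) at_top"
proof -
  have "((\<lambda>t. Le i * path_current t i / xi t i) \<longlongrightarrow> Le i * 1 / 1) at_top"
    by (intro tendsto_intros path_current_limit[OF i] xi_limit[OF i]) simp
  moreover have "\<forall>\<^sub>F t in at_top. Le i * path_current t i / xi t i = dp t i"
    using eventually_ge_at_top[of 0]
  proof eventually_elim
    case (elim t)
    then show ?case using xi_pos[OF elim i] Le_pos[OF i] by (simp add: path_current_def)
  qed
  ultimately show ?thesis by (simp add: tendsto_cong)
qed

text \<open>Telescoping along \<open>P0\<close>: \<open>p (P0 ! j) = \<Sum>_{i \<ge> j} dp_i \<rightarrow> \<Sum>_{i \<ge> j} L_i = dist (P0 ! j) s1\<close>.\<close>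
theorem potential_limit: assumes v: "v \<in> set P0"
  shows "((\<lambda>t. p t v) \<longlongrightarrow> dist_L E L v s1) at_top"
proof -
  obtain j where j: "j < length P0" "v = P0 ! j" using v by (auto simp: in_set_conv_nth)
  then have jh: "j \<le> hops" using P0_facts by simp
  have "((\<lambda>t. \<Sum>i\<in>{j..<hops}. dp t i) \<longlongrightarrow> (\<Sum>i\<in>{j..<hops}. Le i)) at_top"
    by (intro tendsto_sum dp_limit) auto
  moreover have "\<forall>\<^sub>F t in at_top. (\<Sum>i\<in>{j..<hops}. dp t i) = p t v"
    using eventually_ge_at_top[of 0] by eventually_elim (simp add: potential_telescope jh j)
  ultimately show ?thesis using dist_along_P0[OF jh] j by (simp add: tendsto_cong)
qed

end

theorem mainTheorem8:
  fixes N :: "'a set" and E :: "'a set set" and L :: "'a set \<Rightarrow> real"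
    and s0 s1 :: 'a and P0 :: "'a list"
    and D :: "real \<Rightarrow> 'a set \<Rightarrow> real" and p :: "real \<Rightarrow> 'a \<Rightarrow> real"
  assumes "simple_graph N E" and "connected_graph N E"
    and "s0 \<in> N" and "s1 \<in> N" and "s0 \<noteq> s1"
    and "\<forall>e\<in>E. L e > 0"
    and "shortest_path E L s0 s1 P0"
    and "\<forall>P. shortest_path E L s0 s1 P \<longrightarrow> P = P0"
    and "physarum_traj N E L s0 s1 D p"
  shows "\<forall>v\<in>set P0. ((\<lambda>t. p t v) \<longlongrightarrow> dist_L E L v s1) at_top"
proof -
  interpret physarum_unique_shortest_path N E L s0 s1 D p P0
    by unfold_locales (fact assms)+
  show ?thesis using potential_limit by blast
qed

end
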